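(* Let $p$ be a prime. Every $p$-$T_0T^\ast$-perfect number $n>1$ has the form $n=p_1^{2p-1}$ for some prime $p_1$.
   Context: For a positive integer $m$, $T(m)$ denotes the product of all positive divisors of $m$, and $T^\ast(m)$ the product of all unitary divisors of $m$ (divisors $d$ with $\gcd(d,m/d)=1$). For an integer $k\ge 2$, an integer $n>1$ is called $k$-$T_0T^\ast$-perfect if $T(T^\ast(n))=n^k$. *)

theory Defs
  imports "HOL-Computational_Algebra.Primes"
begin

definition divisor_prod :: "nat \<Rightarrow> nat" where
  "divisor_prod m = (\<Prod>d\<in>{d. d dvd m}. d)"

definition unitary_divisor_prod :: "nat \<Rightarrow> nat" where
  "unitary_divisor_prod m = (\<Prod>d\<in>{d. d dvd m \<and> coprime d (m div d)}. d)"

definition k_T0Tstar_perfect :: "nat \<Rightarrow> nat \<Rightarrow> bool" where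
  "k_T0Tstar_perfect k n \<longleftrightarrow> n > 1 \<and> divisor_prod (unitary_divisor_prod n) = n ^ k"

end

theory Submission
  imports Defs
begin

text \<open>Pairing every divisor d of m with m div d gives T(m)^2 = m^tau(m), and likewise
T*(m)^2 = m^u(m), where tau counts divisors and u counts unitary divisors. Hence T(T*(n)) = n^k
forces 4k = u(n) tau(T*(n)). For n = q^a we have T*(n) = n and u(n) = 2, so a = 2k - 1.
Otherwise n = AB with coprime A, B > 1, so u(n) >= 4; since T*(n)^2 = n^u(n), every prime of n
divides T*(n) at least twice, and splitting T*(n) along A and B writes tau(T*(n)) as a product
of two factors >= 3. For k = p prime, 4p = u(n) x y with u(n) >= 4 and x, y >= 3 is impossible.\<close>

definition unitary_divisors :: "nat \<Rightarrow> nat set" where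
  "unitary_divisors m = {d. d dvd m \<and> coprime d (m div d)}"

lemma prod_squared_eq_power_card:
  fixes m :: nat and S :: "nat set"
  assumes "finite S" "m > 0" "\<And>d. d \<in> S \<Longrightarrow> d dvd m \<and> m div d \<in> S"
  shows "(\<Prod>d\<in>S. d) ^ 2 = m ^ card S"
proof -
  have "(\<Prod>d\<in>S. d) = (\<Prod>d\<in>S. m div d)"
    by (rule prod.reindex_bij_witness[where i="\<lambda>d. m div d" and j="\<lambda>d. m div d"])
       (use assms in \<open>auto simp: div_div_eq_right\<close>)
  hence "(\<Prod>d\<in>S. d) ^ 2 = (\<Prod>d\<in>S. d * (m div d))"
    by (simp add: power2_eq_square prod.distrib)
  also have "\<dots> = (\<Prod>d\<in>S. m)" by (rule prod.cong) (use assms in auto)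
  finally show ?thesis by simp
qed

lemma divisor_prod_squared:
  "m > 0 \<Longrightarrow> divisor_prod m ^ 2 = m ^ card {d. d dvd m}"
  unfolding divisor_prod_def by (rule prod_squared_eq_power_card) auto

lemma finite_unitary_divisors: "m > 0 \<Longrightarrow> finite (unitary_divisors m)"
  unfolding unitary_divisors_def by (rule finite_subset[of _ "{d. d dvd m}"]) auto

lemma unitary_divisor_prod_squared:
  assumes "m > 0"
  shows "unitary_divisor_prod m ^ 2 = m ^ card (unitary_divisors m)"
  unfolding unitary_divisor_prod_def unitary_divisors_def[symmetric]
proof (rule prod_squared_eq_power_card[OF finite_unitary_divisors[OF assms] assms])
  fix d assume "d \<in> unitary_divisors m"
  with assms show "d dvd m \<and> m div d \<in> unitary_divisors m"
    by (auto simp: unitary_divisors_def div_div_eq_right coprime_commute)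
qed

lemma k_T0Tstar_perfect_card_eq:
  assumes "k_T0Tstar_perfect k n"
  shows "4 * k = card (unitary_divisors n) * card {d. d dvd unitary_divisor_prod n}"
proof -
  define N where "N = unitary_divisor_prod n"
  have "n > 1" and T: "divisor_prod N = n ^ k"
    using assms unfolding k_T0Tstar_perfect_def N_def by auto
  have N_sq: "N ^ 2 = n ^ card (unitary_divisors n)"
    unfolding N_def using \<open>n > 1\<close> by (simp add: unitary_divisor_prod_squared)
  hence "N > 0" using \<open>n > 1\<close> by (cases "N = 0") simp_all
  have "n ^ (4 * k) = (divisor_prod N ^ 2) ^ 2" using T by (simp flip: power_mult)
  also have "\<dots> = (N ^ 2) ^ card {d. d dvd N}"
    using divisor_prod_squared[OF \<open>N > 0\<close>] by (simp flip: power_mult add: mult.commute)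
  also have "\<dots> = n ^ (card (unitary_divisors n) * card {d. d dvd N})"
    using N_sq by (simp flip: power_mult)
  finally show ?thesis using \<open>n > 1\<close> unfolding N_def by simp
qed

lemma unitary_divisors_prime_power:
  fixes q a :: nat
  assumes "prime q" "a > 0"
  shows "unitary_divisors (q ^ a) = {1, q ^ a}"
proof (intro set_eqI iffI)
  fix d assume "d \<in> unitary_divisors (q ^ a)"
  then obtain i where i: "i \<le> a" "d = q ^ i" "coprime d (q ^ a div d)"
    using divides_primepow_nat[OF assms(1)] by (auto simp: unitary_divisors_def)
  have "q > 1" using assms prime_gt_1_nat by blast
  hence "coprime (q ^ i) (q ^ (a - i))" using i by (simp add: power_diff)
  have "i = 0 \<or> i = a"
  proof (rule ccontr)
    assume "\<not> (i = 0 \<or> i = a)"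
    hence "q dvd q ^ i" "q dvd q ^ (a - i)" using i by auto
    thus False using \<open>coprime (q ^ i) (q ^ (a - i))\<close> \<open>q > 1\<close>
      coprime_common_divisor[of "q ^ i" "q ^ (a - i)" q] by auto
  qed
  thus "d \<in> {1, q ^ a}" using i by auto
next
  fix d assume "d \<in> {1, q ^ a}"
  moreover have "q ^ a > 0" using assms prime_gt_0_nat by simp
  ultimately show "d \<in> unitary_divisors (q ^ a)" by (auto simp: unitary_divisors_def)
qed

lemma unitary_divisor_prod_prime_power:
  fixes q a :: nat
  assumes "prime q" "a > 0"
  shows "unitary_divisor_prod (q ^ a) = q ^ a"
  unfolding unitary_divisor_prod_def unitary_divisors_def[symmetric]
    unitary_divisors_prime_power[OF assms]
  using one_less_power[OF prime_gt_1_nat[OF assms(1)] assms(2)] by simp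

lemma card_divisors_prime_power:
  fixes q a :: nat
  assumes "prime q"
  shows "card {d. d dvd q ^ a} = a + 1"
proof -
  have "q > 1" using assms prime_gt_1_nat by blast
  have "{d. d dvd q ^ a} = (\<lambda>i. q ^ i) ` {..a}" using divides_primepow_nat[OF assms] by auto
  moreover have "inj_on (\<lambda>i. q ^ i) {..a}" using \<open>q > 1\<close> by (auto simp: inj_on_def)
  ultimately show ?thesis by (simp add: card_image)
qed

lemma card_unitary_divisors_ge_four:
  fixes A B :: nat
  assumes "coprime A B" "A > 1" "B > 1"
  shows "4 \<le> card (unitary_divisors (A * B))"
proof -
  have "{1, A, B, A * B} \<subseteq> unitary_divisors (A * B)"
    using assms by (auto simp: unitary_divisors_def coprime_commute)
  moreover have "card {1, A, B, A * B} = 4"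
  proof -
    have "A \<noteq> B" using assms by auto
    moreover have "A \<noteq> A * B" "B \<noteq> A * B" using assms by auto
    ultimately show ?thesis using assms by auto
  qed
  moreover have "finite (unitary_divisors (A * B))"
    using assms by (intro finite_unitary_divisors) simp
  ultimately show ?thesis by (metis card_mono)
qed

lemma gcd_mult_eq_of_coprime_dvd:
  fixes a b x :: nat
  assumes "coprime b x" "a dvd x"
  shows "gcd (a * b) x = a"
  using assms by (simp add: coprime_commute gcd_mult_left_right_cancel)

lemma card_divisors_mult:
  fixes x y :: nat
  assumes "coprime x y"
  shows "card {d. d dvd x * y} = card {d. d dvd x} * card {d. d dvd y}"
proof -
  have "bij_betw (\<lambda>(a, b). a * b) ({a. a dvd x} \<times> {b. b dvd y}) {d. d dvd x * y}"
  proof (rule bij_betwI')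
    fix ab ab' assume "ab \<in> {a. a dvd x} \<times> {b. b dvd y}" "ab' \<in> {a. a dvd x} \<times> {b. b dvd y}"
    then obtain a1 a2 b1 b2 where ab: "ab = (a1, a2)" "ab' = (b1, b2)"
      and dvd: "a1 dvd x" "a2 dvd y" "b1 dvd x" "b2 dvd y" by auto
    have "coprime a2 x" "coprime b2 x" "coprime a1 y" "coprime b1 y"
      using assms dvd by (meson coprime_commute coprime_divisors dvd_refl)+
    \<comment> \<open>the factors are recovered from the product as its gcds with x and with y\<close>
    hence "gcd (a1 * a2) x = a1" "gcd (b1 * b2) x = b1" "gcd (a1 * a2) y = a2" "gcd (b1 * b2) y = b2"
      using dvd gcd_mult_eq_of_coprime_dvd by (metis mult.commute)+
    thus "((\<lambda>(a, b). a * b) ab = (\<lambda>(a, b). a * b) ab') = (ab = ab')"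
      using ab by auto
  next
    fix d assume "d \<in> {d. d dvd x * y}"
    then obtain a b where "d = a * b" "a dvd x" "b dvd y"
      using division_decomp by blast
    thus "\<exists>ab\<in>{a. a dvd x} \<times> {b. b dvd y}. d = (\<lambda>(a, b). a * b) ab" by auto
  qed (auto intro: mult_dvd_mono)
  thus ?thesis by (metis bij_betw_same_card card_cartesian_product)
qed

lemma eq_gcd_mult_gcd_of_dvd_coprime:
  fixes a b N :: nat
  assumes "coprime a b" "N dvd a * b"
  shows "N = gcd N a * gcd N b"
proof -
  obtain a' b' where ab: "N = a' * b'" "a' dvd a" "b' dvd b"
    using division_decomp[OF assms(2)] by blast
  have "coprime b' a" "coprime a' b"
    using assms ab by (meson coprime_commute coprime_divisors dvd_refl)+
  hence "gcd N a = a'" "gcd N b = b'"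
    using ab gcd_mult_eq_of_coprime_dvd[of b' a a'] gcd_mult_eq_of_coprime_dvd[of a' b b']
    by (simp_all add: mult.commute)
  thus ?thesis using ab by simp
qed

lemma card_divisors_ge_three:
  fixes q x :: nat
  assumes "prime q" "q ^ 2 dvd x" "x > 0"
  shows "3 \<le> card {d. d dvd x}"
proof -
  have "q > 1" using assms prime_gt_1_nat by blast
  hence "q < q ^ 2" by (simp add: power2_eq_square)
  moreover have "q ^ 2 \<le> x" using assms by (simp add: dvd_imp_le)
  ultimately have "card {1, q, x} = 3" using \<open>q > 1\<close> by auto
  moreover have "{1, q, x} \<subseteq> {d. d dvd x}"
    using assms(2) by (auto intro: dvd_trans[of q "q ^ 2"])
  moreover have "finite {d. d dvd x}" using assms by simp
  ultimately show ?thesis by (metis card_mono)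
qed

lemma prime_square_dvd_gcd_power_root:
  fixes q A n u N :: nat
  assumes "prime q" "q dvd A" "A dvd n" "4 \<le> u" "N ^ 2 = n ^ u"
  shows "q ^ 2 dvd gcd N (A ^ u)"
proof -
  have "(q ^ 2) ^ 2 dvd q ^ u" using assms by (simp flip: power_mult add: le_imp_power_dvd)
  also have "q ^ u dvd n ^ u" using assms by (meson dvd_trans dvd_power_same)
  finally have "q ^ 2 dvd N" using assms pow_divides_pow_iff[of 2 "q ^ 2" N] by simp
  moreover have "q ^ 2 dvd A ^ u"
    using assms dvd_trans[OF le_imp_power_dvd[of 2 u q] dvd_power_same[OF assms(2)]] by simp
  ultimately show ?thesis by simp
qed

lemma card_divisors_composite_factorization:
  fixes A B N u :: nat
  assumes "coprime A B" "A > 1" "B > 1" "4 \<le> u" "N ^ 2 = (A * B) ^ u"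
  obtains x y where "card {d. d dvd N} = x * y" "3 \<le> x" "3 \<le> y"
proof -
  obtain q r where q: "prime q" "q dvd A" and r: "prime r" "r dvd B"
    using prime_factor_nat assms(2,3) by (metis less_irrefl)
  define X where "X = gcd N (A ^ u)"
  define Y where "Y = gcd N (B ^ u)"
  have N0: "N > 0" using assms by (cases "N = 0") simp_all
  have cop: "coprime (A ^ u) (B ^ u)" using assms by simp
  have "N dvd N ^ 2" by (simp add: power2_eq_square)
  hence "N dvd A ^ u * B ^ u" using assms by (simp add: power_mult_distrib)
  hence "N = X * Y" unfolding X_def Y_def using cop eq_gcd_mult_gcd_of_dvd_coprime by blast
  moreover have "coprime X Y" unfolding X_def Y_def using cop
    by (meson coprime_divisors gcd_dvd2)
  ultimately have "card {d. d dvd N} = card {d. d dvd X} * card {d. d dvd Y}"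
    by (simp add: card_divisors_mult)
  moreover have "3 \<le> card {d. d dvd X}"
    using card_divisors_ge_three[OF q(1) prime_square_dvd_gcd_power_root[OF q _ assms(4,5)]] N0
    unfolding X_def by simp
  moreover have "3 \<le> card {d. d dvd Y}"
    using card_divisors_ge_three[OF r(1) prime_square_dvd_gcd_power_root[OF r _ assms(4,5)]] N0
    unfolding Y_def by simp
  ultimately show ?thesis using that by blast
qed

lemma four_times_prime_neq_mult:
  fixes p u x y :: nat
  assumes "prime p" "4 \<le> u" "3 \<le> x" "3 \<le> y"
  shows "4 * p \<noteq> u * (x * y)"
proof
  assume eq: "4 * p = u * (x * y)"
  have "9 \<le> x * y" using mult_le_mono[OF assms(3,4)] by simp
  have "p dvd u * (x * y)" using eq by (metis dvd_triv_right)
  hence "p dvd u \<or> p dvd x * y" using assms(1) by (simp add: prime_dvd_mult_iff)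
  thus False
  proof
    assume "p dvd u"
    then obtain c where "u = p * c" by blast
    hence "4 = c * (x * y)" using eq prime_gt_0_nat[OF assms(1)] by (simp add: mult.assoc)
    thus False using \<open>9 \<le> x * y\<close> by (cases c) auto
  next
    assume "p dvd x * y"
    then obtain c where c: "x * y = p * c" by blast
    hence "4 = u * c" using eq prime_gt_0_nat[OF assms(1)] by (simp add: ac_simps)
    moreover have "4 * c \<le> u * c" using assms(2) by simp
    ultimately have "c = 1" by (cases c) auto
    hence "x * y = p" using c by simp
    thus False using assms prime_product[of x y] by auto
  qed
qed

lemma not_prime_power_coprime_split:
  fixes n :: nat
  assumes "n > 1" "\<not> (\<exists>q a. prime q \<and> n = q ^ a)"
  obtains A B where "n = A * B" "coprime A B" "A > 1" "B > 1"
proof -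
  obtain q where q: "prime q" "q dvd n" using prime_factor_nat assms(1) by (metis less_irrefl)
  define A where "A = q ^ multiplicity q n"
  define B where "B = n div A"
  have "n = A * B" unfolding A_def B_def by (simp add: multiplicity_dvd)
  moreover have "\<not> q dvd B" unfolding A_def B_def
    by (rule multiplicity_decompose) (use assms q in auto)
  hence "coprime A B" unfolding A_def using q by (simp add: prime_imp_coprime)
  moreover have "multiplicity q n > 0" using q assms by (subst multiplicity_gt_zero_iff) auto
  hence "A > 1" unfolding A_def using q prime_gt_1_nat one_less_power by blast
  moreover have "B > 1"
  proof -
    have "B \<noteq> 0" using assms(1) \<open>n = A * B\<close> by (cases B) auto
    moreover have "B \<noteq> 1" using assms(2) q(1) \<open>n = A * B\<close> unfolding A_def by auto
    ultimately show ?thesis by simp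
  qed
  ultimately show ?thesis using that by blast
qed

theorem mainTheorem7:
  fixes p n :: nat
  assumes "prime p" and "n > 1" and "k_T0Tstar_perfect p n"
  shows "\<exists>p1. prime p1 \<and> n = p1 ^ (2 * p - 1)"
proof (cases "\<exists>q a. prime q \<and> n = q ^ a")
  case True
  then obtain q a where q: "prime q" and n: "n = q ^ a" by blast
  have "a > 0" using n assms(2) by (cases a) auto
  hence "card (unitary_divisors n) = 2"
    using unitary_divisors_prime_power[OF q] n assms(2) by simp
  moreover have "unitary_divisor_prod n = n"
    using unitary_divisor_prod_prime_power[OF q \<open>a > 0\<close>] n by simp
  ultimately have "4 * p = 2 * (a + 1)"
    using k_T0Tstar_perfect_card_eq[OF assms(3)] card_divisors_prime_power[OF q] n by simp
  hence "a = 2 * p - 1" by simp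
  thus ?thesis using q n by blast
next
  case False
  then obtain A B where AB: "n = A * B" "coprime A B" "A > 1" "B > 1"
    using not_prime_power_coprime_split assms(2) by blast
  have u: "4 \<le> card (unitary_divisors n)"
    using card_unitary_divisors_ge_four[OF AB(2-4)] AB(1) by simp
  have "unitary_divisor_prod n ^ 2 = (A * B) ^ card (unitary_divisors n)"
    using unitary_divisor_prod_squared[of n] assms(2) by (simp flip: AB(1))
  then obtain x y where "card {d. d dvd unitary_divisor_prod n} = x * y" "3 \<le> x" "3 \<le> y"
    using card_divisors_composite_factorization[OF AB(2-4) u] by blast
  thus ?thesis
    using four_times_prime_neq_mult[OF assms(1) u] k_T0Tstar_perfect_card_eq[OF assms(3)] by auto
qed

end
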